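(* Let $\mathbf{u}=(u_n)$ be an a-sequence. The following are equivalent: (a) the sequence of ratios $(q_n)$ is bounded; (b) $s_\mathbf{u}(\mathbb{T})\le\mathbb{Q}/\mathbb{Z}$; (c) $s_\mathbf{u}(\mathbb{T})$ is countable; (d) $s_\mathbf{u}(\mathbb{T})$ is an $F_\sigma$-subset of $\mathbb{T}$ (with its usual compact topology); (e) $s_\mathbf{u}(\mathbb{T})$ is $\tau^*_\mathbf{u}$-open; (f) $s_\mathbf{u}(\mathbb{T})$ is $\tau_\mathbf{u}$-open.
   Context: An a-sequence is a strictly increasing sequence of integers $\mathbf{u}=(u_n)_{n\in\mathbb{N}}$ with $u_n\mid u_{n+1}$ for all $n$; its ratios are $q_0=u_0$ and $q_n=u_n/u_{n-1}$ for $n>0$. $\mathbb{T}=\mathbb{R}/\mathbb{Z}$, $\|x\|$ is the distance from $x$ to the nearest integer, $d(x,y)=\|x-y\|$. $s_\mathbf{u}(\mathbb{T})=\{x\in\mathbb{T}: u_nx\to0\text{ in }\mathbb{T}\}$. $\varrho_\mathbf{u}(x,y)=\sup_n\max\{d(x,y),d(u_nx,u_ny)\}$ is a metric on $\mathbb{T}$ and $\tau_\mathbf{u}$ is the topology it induces. $\tau^*_\mathbf{u}$ is the group topology on $\mathbb{T}$ whose filter of neighbourhoods of $0$ is generated by the sets $W_n=\overline{\{x:\varrho_\mathbf{u}(x,0)<1/n\}}$, $n\in\mathbb{N}$, where the closure is taken in the usual topology of $\mathbb{T}$. *)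

theory Defs
  imports "HOL-Analysis.Analysis"
begin

text \<open>The circle group T = R/Z is represented through R: a point of T is given by any
real representative, and a subset of T by its (Z-periodic) preimage in R.\<close>

definition a_seq :: "(nat \<Rightarrow> int) \<Rightarrow> bool" where
  "a_seq u \<longleftrightarrow> strict_mono u \<and> (\<forall>n. u n dvd u (Suc n))"

definition ratio :: "(nat \<Rightarrow> int) \<Rightarrow> nat \<Rightarrow> int" where
  "ratio u n = (if n = 0 then u 0 else u n div u (n - 1))"

definition tnorm :: "real \<Rightarrow> real" where
  "tnorm x = infdist x \<int>"

definition tdist :: "real \<Rightarrow> real \<Rightarrow> real" where
  "tdist x y = tnorm (x - y)"

definition s_u :: "(nat \<Rightarrow> int) \<Rightarrow> real set" where
  "s_u u = {x. ((\<lambda>n. tnorm (of_int (u n) * x)) \<longlongrightarrow> 0) sequentially}"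

definition rho :: "(nat \<Rightarrow> int) \<Rightarrow> real \<Rightarrow> real \<Rightarrow> real" where
  "rho u x y = (SUP n. max (tdist x y) (tdist (of_int (u n) * x) (of_int (u n) * y)))"

definition tau_open :: "(nat \<Rightarrow> int) \<Rightarrow> real set \<Rightarrow> bool" where
  "tau_open u A \<longleftrightarrow> (\<forall>x\<in>A. \<exists>e>0. \<forall>y. rho u x y < e \<longrightarrow> y \<in> A)"

text \<open>W_n: closure (usual topology) of the rho-ball of radius 1/n around 0.
  The closure of a Z-periodic subset of R is the preimage of the closure in T.\<close>
definition W :: "(nat \<Rightarrow> int) \<Rightarrow> nat \<Rightarrow> real set" where
  "W u n = closure {x. rho u x 0 < 1 / real n}"

text \<open>Openness in the group topology tau*_u whose neighbourhood filter of 0 is generated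
  by the W_n (n \<ge> 1): A is open iff each x in A has some x + W_n inside A.\<close>
definition tau_star_open :: "(nat \<Rightarrow> int) \<Rightarrow> real set \<Rightarrow> bool" where
  "tau_star_open u A \<longleftrightarrow> (\<forall>x\<in>A. \<exists>n\<ge>1. (\<lambda>w. x + w) ` W u n \<subseteq> A)"

end

theory Submission
  imports Defs
begin

text \<open>If \<open>\<bar>q n\<bar> \<le> B\<close> and \<open>\<parallel>u n x\<parallel> < 1/(2B)\<close>, then \<open>\<parallel>u (n+1) x\<parallel> = \<bar>q (n+1)\<bar> \<parallel>u n x\<parallel> \<ge> 2 \<parallel>u n x\<parallel>\<close>;
  since \<open>\<parallel>\<cdot>\<parallel> \<le> 1/2\<close>, a sequence that stays this small must vanish, so \<open>u N x \<in> \<int>\<close>. Hence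
  \<open>s_u \<subseteq> \<rat>\<close>, and as the condition only involves \<open>sup\<^sub>n \<parallel>u n x\<parallel>\<close>, a whole set \<open>W n\<close> lies
  in \<open>s_u\<close>, which is therefore \<open>\<tau>\<^sup>*\<close>-open. Countable sets are \<open>F\<^sub>\<sigma>\<close> and \<open>\<tau>\<^sup>*\<close>-open sets are
  \<open>\<tau>\<close>-open in general.

  If the ratios are unbounded, pick indices \<open>m k\<close> with \<open>q (m k) \<ge> k + 2\<close> and consider
  \<open>x = \<Sum>k. a k / u (m k)\<close> with \<open>0 \<le> a k \<le> q (m k) / 4\<close>. For \<open>m (j-1) \<le> n < m j\<close>,
  multiplying by \<open>u n\<close> kills the first \<open>j\<close> terms modulo 1 and leaves at most
  \<open>(a j + 1/2) / q (m j)\<close>, while \<open>\<parallel>u (m j - 1) x\<parallel> \<ge> a j / q (m j)\<close>; so \<open>x \<in> s_u\<close> iff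
  \<open>a k / q (m k) \<rightarrow> 0\<close>. Taking \<open>a k = \<lfloor>r q (m k)\<rfloor>\<close> gives points outside \<open>s_u\<close> that are
  \<open>\<rho>\<close>-close to \<open>0\<close>, and a diagonal argument defeats every countable family of closed
  subsets of \<open>s_u\<close>.\<close>

subsection \<open>The distance to the nearest integer\<close>

lemma tnorm_eq_round: "tnorm x = \<bar>x - of_int (round x)\<bar>"
proof -
  have ne: "(\<int>::real set) \<noteq> {}" by (metis Ints_0 empty_iff)
  have le: "tnorm x \<le> \<bar>x - of_int (round x)\<bar>"
    unfolding tnorm_def using infdist_le[of "of_int (round x)" "\<int>" x] by (simp add: dist_real_def)
  have ge: "\<bar>x - of_int (round x)\<bar> \<le> tnorm x"
    unfolding tnorm_def infdist_notempty[OF ne]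
  proof (rule cINF_greatest[OF ne])
    fix a :: real assume "a \<in> \<int>"
    then obtain k where k: "a = of_int k" by (auto elim: Ints_cases)
    show "\<bar>x - of_int (round x)\<bar> \<le> dist x a"
    proof (rule ccontr)
      assume "\<not> ?thesis"
      hence closer: "\<bar>x - of_int k\<bar> < \<bar>x - of_int (round x)\<bar>" using k by (simp add: dist_real_def)
      moreover have "\<bar>of_int (round x) - x\<bar> \<le> 1/2" by (rule of_int_round_abs_le)
      ultimately have "\<bar>k - round x\<bar> < 1" by linarith
      hence "k = round x" by linarith
      thus False using closer by simp
    qed
  qed
  show ?thesis using le ge by linarith
qed

lemma tnorm_le_int: "tnorm x \<le> \<bar>x - of_int k\<bar>"
  unfolding tnorm_def using infdist_le[of "of_int k" "\<int>" x] by (simp add: dist_real_def)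

lemma tnorm_nonneg: "0 \<le> tnorm x"
  by (simp add: tnorm_def infdist_nonneg)

lemma tnorm_le_half: "tnorm x \<le> 1/2"
  using tnorm_eq_round[of x] of_int_round_abs_le[of x] by linarith

lemma tnorm_le_abs: "tnorm x \<le> \<bar>x\<bar>"
  using tnorm_le_int[of x 0] by simp

lemma tnorm_eq_abs: "\<bar>x\<bar> \<le> 1/2 \<Longrightarrow> tnorm x = \<bar>x\<bar>"
  using tnorm_eq_round[of x] tnorm_le_abs[of x] by (cases "round x = 0") auto

lemma tnorm_add_int: "tnorm (x + of_int k) = tnorm x"
proof -
  have "tnorm (x + of_int k) \<le> tnorm x"
    using tnorm_le_int[of "x + of_int k" "round x + k"] tnorm_eq_round[of x] by simp
  moreover have "tnorm x \<le> tnorm (x + of_int k)"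
    using tnorm_le_int[of x "round (x + of_int k) - k"] tnorm_eq_round[of "x + of_int k"] by simp
  ultimately show ?thesis by linarith
qed

lemma tnorm_add_Ints: "y \<in> \<int> \<Longrightarrow> tnorm (x + y) = tnorm x"
  by (auto elim!: Ints_cases simp: tnorm_add_int)

lemma tnorm_minus: "tnorm (- x) = tnorm x"
proof -
  have "tnorm (-x) \<le> tnorm x"
    using tnorm_le_int[of "-x" "- round x"] tnorm_eq_round[of x] by simp
  moreover have "tnorm x \<le> tnorm (-x)"
    using tnorm_le_int[of x "- round (-x)"] tnorm_eq_round[of "-x"] by simp
  ultimately show ?thesis by linarith
qed

lemma tnorm_triangle: "tnorm (x + y) \<le> tnorm x + tnorm y"
  using tnorm_le_int[of "x + y" "round x + round y"] tnorm_eq_round[of x] tnorm_eq_round[of y] by simp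

lemma tnorm_eq_0_iff: "tnorm x = 0 \<longleftrightarrow> x \<in> \<int>"
proof
  assume "tnorm x = 0"
  hence "x = of_int (round x)" using tnorm_eq_round[of x] by simp
  thus "x \<in> \<int>" by (metis Ints_of_int)
next
  assume "x \<in> \<int>"
  thus "tnorm x = 0" using tnorm_add_Ints[of x 0] tnorm_le_abs[of 0] tnorm_nonneg[of 0] by simp
qed

lemma tnorm_mult_int_eq:
  assumes "\<bar>of_int q\<bar> * tnorm y \<le> 1/2"
  shows "tnorm (of_int q * y) = \<bar>of_int q\<bar> * tnorm y"
proof -
  define \<delta> where "\<delta> = y - of_int (round y)"
  have "of_int q * y = of_int q * \<delta> + of_int (q * round y)"
    unfolding \<delta>_def by (simp add: algebra_simps)
  hence "tnorm (of_int q * y) = tnorm (of_int q * \<delta>)"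
    using tnorm_add_int[of "of_int q * \<delta>" "q * round y"] by simp
  also have "\<dots> = \<bar>of_int q\<bar> * tnorm y"
    using assms tnorm_eq_abs[of "of_int q * \<delta>"] tnorm_eq_round[of y] by (simp add: \<delta>_def abs_mult)
  finally show ?thesis .
qed

lemma continuous_on_tnorm: "continuous_on UNIV tnorm"
  unfolding tnorm_def by (intro continuous_intros)

lemma closed_tnorm_mult_le: "closed {y. \<forall>k. tnorm (of_int (u k) * y) \<le> c}"
proof -
  have "closed {y. tnorm (of_int (u k) * y) \<le> c}" for k
    by (intro closed_Collect_le continuous_on_compose2[OF continuous_on_tnorm] continuous_intros) auto
  moreover have "{y. \<forall>k. tnorm (of_int (u k) * y) \<le> c} = (\<Inter>k. {y. tnorm (of_int (u k) * y) \<le> c})"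
    by auto
  ultimately show ?thesis by auto
qed

lemma a_seq_dvd: assumes "a_seq u" "a \<le> b" shows "u a dvd u b"
  using assms(2)
proof (induction b rule: dec_induct)
  case (step b)
  thus ?case using assms(1) dvd_trans unfolding a_seq_def by blast
qed simp

lemma a_seq_less: "a_seq u \<Longrightarrow> a < b \<Longrightarrow> u a < u b"
  unfolding a_seq_def strict_mono_def by blast

lemma a_seq_nonzero: assumes "a_seq u" shows "u n \<noteq> 0"
proof
  assume "u n = 0"
  hence "u (Suc n) = 0" using a_seq_dvd[OF assms, of n "Suc n"] by simp
  thus False using \<open>u n = 0\<close> a_seq_less[OF assms, of n "Suc n"] by simp
qed

lemma a_seq_pos: assumes "a_seq u" "n \<ge> 1" shows "u n > 0"
proof -
  have "u 1 > 0"
  proof (rule ccontr)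
    assume "\<not> u 1 > 0"
    moreover have "u 0 < u 1" using a_seq_less[OF assms(1), of 0 1] by simp
    moreover have "\<bar>u 0\<bar> \<le> \<bar>u 1\<bar>"
      using a_seq_dvd[OF assms(1), of 0 1] a_seq_nonzero[OF assms(1), of 1] by (simp add: dvd_imp_le_int)
    ultimately show False by linarith
  qed
  thus ?thesis using assms a_seq_less[OF assms(1), of 1 n] by (cases "n = 1") auto
qed

lemma a_seq_abs_le: assumes "a_seq u" "n \<le> M" "1 \<le> M" shows "\<bar>u n\<bar> \<le> u M"
proof (cases "n = 0")
  case True
  have "\<bar>u 0\<bar> \<le> \<bar>u M\<bar>"
    using a_seq_dvd[OF assms(1), of 0 M] a_seq_nonzero[OF assms(1), of M] by (simp add: dvd_imp_le_int)
  thus ?thesis using True a_seq_pos[OF assms(1,3)] by simp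
next
  case False
  thus ?thesis using a_seq_pos[OF assms(1), of n] a_seq_less[OF assms(1), of n M] assms(2)
    by (cases "n = M") auto
qed

lemma a_seq_ratio_mult: assumes "a_seq u" "n \<ge> 1" shows "u n = ratio u n * u (n - 1)"
  using a_seq_dvd[OF assms(1), of "n - 1" n] assms(2) unfolding ratio_def by auto

lemma a_seq_ratio_ge_2: assumes "a_seq u" "n \<ge> 2" shows "ratio u n \<ge> 2"
proof -
  have "0 < u (n - 1)" "u (n - 1) < ratio u n * u (n - 1)"
    using a_seq_pos[OF assms(1), of "n - 1"] a_seq_less[OF assms(1), of "n - 1" n]
      a_seq_ratio_mult[OF assms(1), of n] assms(2) by simp_all
  hence "1 < ratio u n" by (metis mult_less_cancel_right_pos mult_1)
  thus ?thesis by linarith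
qed

lemma zero_in_s_u: "0 \<in> s_u u"
  unfolding s_u_def using tnorm_eq_0_iff[of 0] by simp

lemma s_u_add: assumes "x \<in> s_u u" "y \<in> s_u u" shows "x + y \<in> s_u u"
proof -
  define h where "h n = tnorm (of_int (u n) * x) + tnorm (of_int (u n) * y)" for n
  have lim_h: "(h \<longlongrightarrow> 0) sequentially"
    using assms unfolding s_u_def h_def by (intro tendsto_add_zero) auto
  have le_h: "tnorm (of_int (u n) * (x + y)) \<le> h n" for n
    using tnorm_triangle[of "of_int (u n) * x" "of_int (u n) * y"] by (simp only: h_def distrib_left)
  have "((\<lambda>n. tnorm (of_int (u n) * (x + y))) \<longlongrightarrow> 0) sequentially"
    by (rule tendsto_sandwich[where f="\<lambda>_. 0" and h=h]) (use lim_h le_h in \<open>auto simp: tnorm_nonneg\<close>)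
  thus ?thesis unfolding s_u_def by simp
qed

lemma mem_s_u_if_int_mult:
  assumes "a_seq u" "of_int (u N) * z \<in> \<int>"
  shows "z \<in> s_u u"
proof -
  have "tnorm (of_int (u n) * z) = 0" if n: "n \<ge> N" for n
  proof -
    obtain c where "u n = u N * c" using a_seq_dvd[OF assms(1) n] by (rule dvdE)
    hence "of_int (u n) * z = of_int c * (of_int (u N) * z)" by simp
    thus ?thesis using assms(2) tnorm_eq_0_iff by (metis Ints_mult Ints_of_int)
  qed
  hence "((\<lambda>n. tnorm (of_int (u n) * z)) \<longlongrightarrow> 0) sequentially"
    by (intro tendsto_eventually) (auto simp: eventually_sequentially)
  thus ?thesis unfolding s_u_def by simp
qed

lemma rho_ge: "max (tdist x y) (tdist (of_int (u k) * x) (of_int (u k) * y)) \<le> rho u x y"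
  unfolding rho_def
proof (rule cSUP_upper)
  show "bdd_above (range (\<lambda>n. max (tdist x y) (tdist (of_int (u n) * x) (of_int (u n) * y))))"
    unfolding tdist_def by (intro bdd_aboveI2[where M="1/2"] max.boundedI tnorm_le_half)
qed simp

lemma rho_le:
  assumes "tdist x y \<le> c" "\<And>k. tdist (of_int (u k) * x) (of_int (u k) * y) \<le> c"
  shows "rho u x y \<le> c"
  unfolding rho_def by (rule cSUP_least) (use assms in auto)

lemma rho_eq_rho_diff: "rho u x y = rho u (y - x) 0"
proof -
  have "tnorm (c * x - c * y) = tnorm (c * (y - x) - c * 0)" for c
    using tnorm_minus[of "c * x - c * y"] by (simp add: algebra_simps)
  from this[of 1] this show ?thesis unfolding rho_def tdist_def by simp
qed

lemma tau_open_if_tau_star_open: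
  assumes "tau_star_open u A"
  shows "tau_open u A"
  unfolding tau_open_def
proof
  fix x assume "x \<in> A"
  then obtain n where n: "n \<ge> 1" "(\<lambda>w. x + w) ` W u n \<subseteq> A"
    using assms unfolding tau_star_open_def by blast
  have "y \<in> A" if "rho u x y < 1 / real n" for y
  proof -
    have "y - x \<in> {z. rho u z 0 < 1 / real n}"
      using that by (simp add: rho_eq_rho_diff[of u x y])
    hence "y - x \<in> W u n" unfolding W_def by (rule subsetD[OF closure_subset])
    hence "x + (y - x) \<in> A" by (intro subsetD[OF n(2)] imageI)
    thus ?thesis by simp
  qed
  thus "\<exists>e>0. \<forall>y. rho u x y < e \<longrightarrow> y \<in> A" using n(1) by (intro exI[of _ "1 / real n"]) auto
qed


subsection \<open>Bounded ratios\<close>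

lemma bounded_ratio_ge_2: assumes "a_seq u" "\<forall>n. \<bar>ratio u n\<bar> \<le> B" shows "B \<ge> 2"
  using a_seq_ratio_ge_2[OF assms(1), of 2] assms(2)[rule_format, of 2] by simp

lemma tnorm_mult_Suc_ge:
  assumes "a_seq u" "n \<ge> 1" "\<bar>ratio u (Suc n)\<bar> \<le> B" "tnorm (of_int (u n) * z) < 1 / (2 * B)"
  shows "2 * tnorm (of_int (u n) * z) \<le> tnorm (of_int (u (Suc n)) * z)"
proof -
  define q where "q = ratio u (Suc n)"
  define t where "t = tnorm (of_int (u n) * z)"
  have q2: "q \<ge> 2" unfolding q_def using a_seq_ratio_ge_2[OF assms(1), of "Suc n"] assms(2) by simp
  have "\<bar>of_int q\<bar> * t \<le> of_int B * t"
    using assms(3) tnorm_nonneg[of "of_int (u n) * z"] unfolding q_def t_def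
    by (intro mult_right_mono) auto
  also have "\<dots> \<le> of_int B * (1 / (2 * of_int B))"
    using assms(4) q2 assms(3) unfolding t_def q_def by (intro mult_left_mono) auto
  also have "\<dots> = 1/2" using q2 assms(3) unfolding q_def by simp
  finally have "\<bar>of_int q\<bar> * t \<le> 1/2" .
  moreover have "of_int (u (Suc n)) * z = of_int q * (of_int (u n) * z)"
    using a_seq_ratio_mult[OF assms(1), of "Suc n"] unfolding q_def by simp
  ultimately have "tnorm (of_int (u (Suc n)) * z) = \<bar>of_int q\<bar> * t"
    unfolding t_def by (simp only: tnorm_mult_int_eq)
  moreover have "2 * t \<le> \<bar>of_int q\<bar> * t"
    using q2 tnorm_nonneg[of "of_int (u n) * z"] unfolding t_def by (intro mult_right_mono) auto
  ultimately show ?thesis unfolding t_def by simp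
qed

lemma int_mult_if_tnorm_mult_small:
  assumes "a_seq u" "\<forall>n. \<bar>ratio u n\<bar> \<le> B" "N \<ge> 1"
    and small: "\<forall>n\<ge>N. tnorm (of_int (u n) * z) < 1 / (2 * B)"
  shows "of_int (u N) * z \<in> \<int>"
proof -
  define t where "t = tnorm (of_int (u N) * z)"
  have grow: "2 ^ k * t \<le> tnorm (of_int (u (N + k)) * z)" for k
  proof (induction k)
    case (Suc k)
    have "2 * tnorm (of_int (u (N + k)) * z) \<le> tnorm (of_int (u (Suc (N + k))) * z)"
      using assms by (intro tnorm_mult_Suc_ge[where B=B]) auto
    thus ?case using Suc by simp
  qed (simp add: t_def)
  have "t = 0"
  proof (rule ccontr)
    assume "t \<noteq> 0"
    hence "t > 0" using tnorm_nonneg[of "of_int (u N) * z"] unfolding t_def by linarith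
    moreover obtain k where "1 / t < 2 ^ k" using real_arch_pow[of 2 "1 / t"] by auto
    ultimately have "1 < 2 ^ k * t" by (simp add: field_simps)
    thus False using grow[of k] tnorm_le_half[of "of_int (u (N + k)) * z"] by linarith
  qed
  thus ?thesis using tnorm_eq_0_iff unfolding t_def by simp
qed

lemma s_u_subset_Rats_if_bounded:
  assumes "a_seq u" "\<forall>n. \<bar>ratio u n\<bar> \<le> B"
  shows "s_u u \<subseteq> \<rat>"
proof
  fix x assume "x \<in> s_u u"
  hence "((\<lambda>n. tnorm (of_int (u n) * x)) \<longlongrightarrow> 0) sequentially" unfolding s_u_def by simp
  from order_tendstoD(2)[OF this, of "1 / (2 * of_int B)"] bounded_ratio_ge_2[OF assms]
  obtain N where N: "\<forall>n\<ge>N. tnorm (of_int (u n) * x) < 1 / (2 * of_int B)"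
    by (auto simp: eventually_sequentially)
  hence "of_int (u (Suc N)) * x \<in> \<int>"
    by (intro int_mult_if_tnorm_mult_small[OF assms]) auto
  then obtain k where "of_int (u (Suc N)) * x = of_int k" by (auto elim: Ints_cases)
  hence "x = of_int k / of_int (u (Suc N))" using a_seq_nonzero[OF assms(1)] by (simp add: field_simps)
  thus "x \<in> \<rat>" by simp
qed

lemma tau_star_open_s_u_if_bounded:
  assumes "a_seq u" "\<forall>n. \<bar>ratio u n\<bar> \<le> B"
  shows "tau_star_open u (s_u u)"
  unfolding tau_star_open_def
proof
  fix x assume x: "x \<in> s_u u"
  define n where "n = nat (2 * B) + 1"
  have B2: "B \<ge> 2" by (rule bounded_ratio_ge_2[OF assms])
  hence "real n = 2 * of_int B + 1" unfolding n_def by simp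
  hence n_large: "1 / real n < 1 / (2 * of_int B)"
    using B2 by (simp add: frac_less2)
  have "{y. rho u y 0 < 1 / real n} \<subseteq> {y. \<forall>k. tnorm (of_int (u k) * y) \<le> 1 / real n}"
  proof safe
    fix y k assume "rho u y 0 < 1 / real n"
    moreover have "tnorm (of_int (u k) * y) \<le> rho u y 0" using rho_ge[of y 0 u k] by (simp add: tdist_def)
    ultimately show "tnorm (of_int (u k) * y) \<le> 1 / real n" by simp
  qed
  hence W_sub: "W u n \<subseteq> {y. \<forall>k. tnorm (of_int (u k) * y) \<le> 1 / real n}"
    unfolding W_def by (rule closure_minimal[OF _ closed_tnorm_mult_le])
  have "x + z \<in> s_u u" if "z \<in> W u n" for z
  proof -
    have "\<forall>k. tnorm (of_int (u k) * z) \<le> 1 / real n" using W_sub that by blast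
    hence "\<forall>k\<ge>1. tnorm (of_int (u k) * z) < 1 / (2 * of_int B)" using n_large by (auto intro: le_less_trans)
    hence "of_int (u 1) * z \<in> \<int>" by (intro int_mult_if_tnorm_mult_small[OF assms]) auto
    thus ?thesis using s_u_add[OF x] mem_s_u_if_int_mult[OF assms(1)] by blast
  qed
  thus "\<exists>n\<ge>1. (\<lambda>w. x + w) ` W u n \<subseteq> s_u u" unfolding n_def by force
qed

subsection \<open>Unbounded ratios: a family of series\<close>

lemma diagonal_stable:
  fixes L :: "nat \<Rightarrow> nat"
  assumes "\<And>i. L i < L (Suc i)" "\<And>i k. k < L i \<Longrightarrow> P (Suc i) k = P i k" "k < L i"
  shows "P (Suc k) k = P i k"
proof -
  have L_strict: "strict_mono L" using assms(1) by (rule strict_monoI_Suc)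
  have stable: "P j k = P i k" if "i \<le> j" "k < L i" for i j
    using that(1)
  proof (induction j rule: dec_induct)
    case (step j)
    thus ?case using assms(2)[of k j] monoD[OF strict_mono_mono[OF L_strict] step(1)] that(2) by simp
  qed simp
  have "k < L (Suc k)" using strict_mono_imp_increasing[OF L_strict, of "Suc k"] by simp
  thus ?thesis using stable[of "Suc k" "max i (Suc k)"] stable[of i "max i (Suc k)"] assms(3) by simp
qed

locale ratio_spikes =
  fixes u :: "nat \<Rightarrow> int" and m :: "nat \<Rightarrow> nat"
  assumes a_seq: "a_seq u" and m_0: "2 \<le> m 0" and m_less_Suc: "\<And>k. m k < m (Suc k)"
    and ratio_m: "\<And>k. int k + 2 \<le> ratio u (m k)"
begin

definition v :: "nat \<Rightarrow> real" where "v k = of_int (u (m k - 1))"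
definition w :: "nat \<Rightarrow> real" where "w k = of_int (u (m k))"
definition Q :: "nat \<Rightarrow> real" where "Q k = of_int (ratio u (m k))"

lemma m_ge: "k + 2 \<le> m k"
proof (induction k)
  case (Suc k) thus ?case using m_less_Suc[of k] by simp
qed (use m_0 in simp)

lemma strict_mono_m: "strict_mono m"
  using m_less_Suc by (rule strict_monoI_Suc)

lemma v_pos: "v k > 0"
  unfolding v_def using a_seq_pos[OF a_seq, of "m k - 1"] m_ge[of k] by simp

lemma w_eq: "w k = Q k * v k"
  unfolding w_def Q_def v_def using a_seq_ratio_mult[OF a_seq, of "m k"] m_ge[of k]
  by (simp flip: of_int_mult)

lemma Q_ge: "real k + 2 \<le> Q k"
  unfolding Q_def using ratio_m[of k] by linarith

lemma Q_ge_2: "2 \<le> Q k"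
  using Q_ge[of k] by simp

lemma w_pos: "w k > 0"
  using w_eq[of k] v_pos[of k] Q_ge_2[of k] by simp

lemma w_le_v_Suc: "w k \<le> v (Suc k)"
proof -
  have "m k \<le> m (Suc k) - 1" using m_less_Suc[of k] by simp
  hence "u (m k) \<le> u (m (Suc k) - 1)"
    using a_seq_less[OF a_seq, of "m k" "m (Suc k) - 1"] by (cases "m k = m (Suc k) - 1") auto
  thus ?thesis unfolding w_def v_def by simp
qed

lemma v_add_ge: "2 ^ l * v j \<le> v (l + j)"
proof (induction l)
  case (Suc l)
  have "2 * v (l + j) \<le> w (l + j)"
    using w_eq[of "l + j"] Q_ge_2[of "l + j"] v_pos[of "l + j"] by (simp add: mult_right_mono)
  with Suc w_le_v_Suc[of "l + j"] show ?case by simp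
qed simp

lemma v_ge_pow: "2 ^ k \<le> v k"
proof -
  have "0 < u (m 0 - 1)" using a_seq_pos[OF a_seq, of "m 0 - 1"] m_0 by simp
  hence "2 ^ k * 1 \<le> 2 ^ k * v 0" unfolding v_def by (intro mult_left_mono) auto
  thus ?thesis using v_add_ge[of k 0] by (metis add.right_neutral mult.right_neutral order_trans)
qed

definition admissible :: "real \<Rightarrow> (nat \<Rightarrow> int) \<Rightarrow> bool" where
  "admissible r a \<longleftrightarrow> (\<forall>k. 0 \<le> a k \<and> of_int (a k) \<le> r * Q k)"

definition series :: "(nat \<Rightarrow> int) \<Rightarrow> real" where
  "series a = (\<Sum>k. of_int (a k) / w k)"

definition tail :: "(nat \<Rightarrow> int) \<Rightarrow> nat \<Rightarrow> real" where
  "tail a j = (\<Sum>l. of_int (a (l + j)) / w (l + j))"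

lemma admissible_nonneg: assumes "admissible r a" shows "0 \<le> r"
proof -
  have "0 \<le> r * Q 0" using assms unfolding admissible_def by (metis of_int_0_le_iff order_trans)
  thus ?thesis using Q_ge_2[of 0] by (simp add: zero_le_mult_iff)
qed

lemma admissible_term_bounds:
  assumes "admissible r a"
  shows "0 \<le> of_int (a k) / w k" "of_int (a k) / w k \<le> r / v k"
proof -
  show "0 \<le> of_int (a k) / w k" using assms w_pos[of k] unfolding admissible_def by simp
  have "of_int (a k) / w k \<le> r * Q k / w k"
    using assms w_pos[of k] unfolding admissible_def by (simp add: divide_right_mono)
  also have "\<dots> = r / v k" using w_eq[of k] v_pos[of k] Q_ge_2[of k] by simp
  finally show "of_int (a k) / w k \<le> r / v k" .
qed

lemma admissible_quotient_le: "admissible r a \<Longrightarrow> of_int (a k) / Q k \<le> r"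
  unfolding admissible_def using Q_ge_2[of k] by (simp add: field_simps)

lemma tail_term_le:
  assumes "admissible r a"
  shows "of_int (a (l + j)) / w (l + j) \<le> r / v j * (1/2) ^ l"
proof -
  have "of_int (a (l + j)) / w (l + j) \<le> r / v (l + j)" by (rule admissible_term_bounds(2)[OF assms])
  also have "\<dots> \<le> r / (2 ^ l * v j)"
    using admissible_nonneg[OF assms] v_add_ge[of l j] v_pos[of j] v_pos[of "l + j"]
    by (intro divide_left_mono) auto
  also have "\<dots> = r / v j * (1/2) ^ l" by (simp add: power_one_over)
  finally show ?thesis .
qed

lemma summable_tail_terms:
  assumes "admissible r a"
  shows "summable (\<lambda>l. of_int (a (l + j)) / w (l + j))"
proof (rule summable_comparison_test'[of "\<lambda>l. r / v j * (1/2) ^ l" 0])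
  show "summable (\<lambda>l. r / v j * (1/2::real) ^ l)" by (intro summable_mult summable_geometric) simp
  show "norm (of_int (a (l + j)) / w (l + j)) \<le> r / v j * (1/2) ^ l" for l
    unfolding real_norm_def
    by (subst abs_of_nonneg[OF admissible_term_bounds(1)[OF assms]]) (rule tail_term_le[OF assms])
qed

lemma series_split: "admissible r a \<Longrightarrow> series a = (\<Sum>l<j. of_int (a l) / w l) + tail a j"
  unfolding series_def tail_def
  using suminf_split_initial_segment[OF summable_tail_terms[of r a 0], of j] by simp

lemma tail_Suc: "admissible r a \<Longrightarrow> tail a j = of_int (a j) / w j + tail a (Suc j)"
  unfolding tail_def using suminf_split_head[OF summable_tail_terms[of r a j]] by simp

lemma tail_nonneg: "admissible r a \<Longrightarrow> 0 \<le> tail a j"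
  unfolding tail_def by (intro suminf_nonneg summable_tail_terms admissible_term_bounds(1))

lemma tail_le: assumes "admissible r a" shows "tail a j \<le> 2 * r / v j"
proof -
  have geo: "(\<lambda>l. r / v j * (1/2) ^ l) sums (2 * r / v j)"
    using sums_mult[OF geometric_sums[of "1/2::real"], of "r / v j"] by (simp add: mult_ac)
  show ?thesis unfolding tail_def
    using suminf_le[OF tail_term_le[OF assms] summable_tail_terms[OF assms] sums_summable[OF geo]] sums_unique[OF geo] by simp
qed

lemma tail_ge: "admissible r a \<Longrightarrow> of_int (a j) / w j \<le> tail a j"
  using tail_Suc[of r a j] tail_nonneg[of r a "Suc j"] by simp

lemma tail_le_term: assumes "admissible r a" shows "tail a j \<le> (of_int (a j) + 2 * r) / w j"
proof -
  have "tail a (Suc j) \<le> 2 * r / w j"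
    using tail_le[OF assms, of "Suc j"] w_le_v_Suc[of j] w_pos[of j] admissible_nonneg[OF assms]
    by (smt (verit) frac_le)
  thus ?thesis using tail_Suc[OF assms, of j] by (simp add: add_divide_distrib)
qed

lemma Ints_mult_partial_sum:
  assumes "\<forall>l<j. u (m l) dvd d"
  shows "of_int d * (\<Sum>l<j. of_int (a l) / w l) \<in> \<int>"
proof -
  have "of_int d * (of_int (a l) / w l) = of_int (d div u (m l) * a l)" if "l < j" for l
    using assms that a_seq_nonzero[OF a_seq, of "m l"] unfolding w_def by (auto elim!: dvdE)
  hence "of_int d * (\<Sum>l<j. of_int (a l) / w l) = (\<Sum>l<j. of_int (d div u (m l) * a l))"
    unfolding sum_distrib_left by (intro sum.cong) auto
  thus ?thesis by (simp add: Ints_sum)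
qed

lemma tnorm_mult_series_eq_tail:
  assumes "admissible r a" "\<forall>l<j. u (m l) dvd d"
  shows "tnorm (of_int d * series a) = tnorm (of_int d * tail a j)"
  using series_split[OF assms(1), of j] tnorm_add_Ints[OF Ints_mult_partial_sum[OF assms(2)]]
  by (simp add: distrib_left add.commute)

lemma tnorm_mult_series_le:
  assumes "admissible r a" "\<forall>l<j. u (m l) dvd d" "\<bar>of_int d\<bar> \<le> v j"
  shows "tnorm (of_int d * series a) \<le> (of_int (a j) + 2 * r) / Q j"
proof -
  have "tnorm (of_int d * series a) \<le> \<bar>of_int d\<bar> * tail a j"
    using tnorm_mult_series_eq_tail[OF assms(1,2)] tnorm_le_abs[of "of_int d * tail a j"]
      tail_nonneg[OF assms(1), of j] by (simp add: abs_mult)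
  also have "\<dots> \<le> v j * ((of_int (a j) + 2 * r) / w j)"
    using assms(3) tail_le_term[OF assms(1), of j] tail_nonneg[OF assms(1), of j]
    by (intro mult_mono) auto
  also have "\<dots> = (of_int (a j) + 2 * r) / Q j"
    using w_eq[of j] v_pos[of j] Q_ge_2[of j] by simp
  finally show ?thesis .
qed

lemma block_bound_le: assumes "admissible r a" shows "(of_int (a j) + 2 * r) / Q j \<le> 2 * r"
proof -
  have "2 * r / Q j \<le> 2 * r / 2"
    using admissible_nonneg[OF assms] Q_ge_2[of j] by (intro divide_left_mono) auto
  thus ?thesis using admissible_quotient_le[OF assms, of j] by (simp add: add_divide_distrib)
qed

lemma tnorm_mult_series_ge:
  assumes "admissible r a" "r \<le> 1/4"
  shows "of_int (a j) / Q j \<le> tnorm (of_int (u (m j - 1)) * series a)"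
proof -
  have "m l \<le> m j - 1" if "l < j" for l
    using strict_mono_m that unfolding strict_mono_def by (metis Suc_diff_1 less_Suc_eq_le not_gr_zero not_less0)
  hence "\<forall>l<j. u (m l) dvd u (m j - 1)" using a_seq_dvd[OF a_seq] by blast
  hence eq: "tnorm (of_int (u (m j - 1)) * series a) = tnorm (v j * tail a j)"
    unfolding v_def by (rule tnorm_mult_series_eq_tail[OF assms(1)])
  have lo: "v j * (of_int (a j) / w j) \<le> v j * tail a j"
    by (rule mult_left_mono[OF tail_ge[OF assms(1)]]) (use v_pos[of j] in simp)
  have hi: "v j * tail a j \<le> v j * ((of_int (a j) + 2 * r) / w j)"
    by (rule mult_left_mono[OF tail_le_term[OF assms(1)]]) (use v_pos[of j] in simp)
  have lo_eq: "v j * (of_int (a j) / w j) = of_int (a j) / Q j"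
    and hi_eq: "v j * ((of_int (a j) + 2 * r) / w j) = (of_int (a j) + 2 * r) / Q j"
    using w_eq[of j] v_pos[of j] Q_ge_2[of j] by simp_all
  have "0 \<le> of_int (a j) / Q j"
    using assms(1) Q_ge_2[of j] unfolding admissible_def by simp
  hence "0 \<le> v j * tail a j" "v j * tail a j \<le> 1/2"
    using lo lo_eq hi hi_eq block_bound_le[OF assms(1), of j] assms(2) by linarith+
  hence "tnorm (v j * tail a j) = v j * tail a j" using tnorm_eq_abs by simp
  thus ?thesis using eq lo lo_eq by simp
qed

definition block :: "nat \<Rightarrow> nat" where "block n = (LEAST j. n < m j)"

lemma block_less: "n < m (block n)"
  unfolding block_def by (rule LeastI[of _ n]) (use m_ge[of n] in simp)

lemma m_le_if_less_block: "l < block n \<Longrightarrow> m l \<le> n"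
  unfolding block_def using not_less_Least by (metis not_le)

lemma filterlim_block: "filterlim block at_top sequentially"
  unfolding filterlim_at_top eventually_sequentially
proof (intro allI exI[of _ "m _"] impI)
  fix J n assume "m J \<le> n"
  show "J \<le> block n"
  proof (rule ccontr)
    assume "\<not> J \<le> block n"
    hence "m (block n) < m J" using strict_mono_m by (simp add: strict_mono_less)
    thus False using block_less[of n] \<open>m J \<le> n\<close> by simp
  qed
qed

lemma tnorm_u_mult_series_le:
  assumes "admissible r a"
  shows "tnorm (of_int (u n) * series a) \<le> (of_int (a (block n)) + 2 * r) / Q (block n)"
proof (rule tnorm_mult_series_le[OF assms])
  show "\<forall>l<block n. u (m l) dvd u n" using m_le_if_less_block a_seq_dvd[OF a_seq] by blast
  have "\<bar>u n\<bar> \<le> u (m (block n) - 1)"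
    using a_seq_abs_le[OF a_seq] block_less[of n] m_ge[of "block n"] by simp
  thus "\<bar>of_int (u n)\<bar> \<le> v (block n)" unfolding v_def by linarith
qed

lemma filterlim_Q: "filterlim Q at_top sequentially"
proof (rule filterlim_at_top_mono[OF filterlim_real_sequentially always_eventually], intro allI)
  fix k show "real k \<le> Q k" using Q_ge[of k] by linarith
qed

lemma series_in_s_u_iff:
  assumes "admissible r a" "r \<le> 1/4"
  shows "series a \<in> s_u u \<longleftrightarrow> ((\<lambda>k. of_int (a k) / Q k) \<longlongrightarrow> 0) sequentially"
proof
  assume "series a \<in> s_u u"
  hence "((\<lambda>n. tnorm (of_int (u n) * series a)) \<longlongrightarrow> 0) sequentially" unfolding s_u_def by simp
  moreover have "filterlim (\<lambda>k. m k - 1) at_top sequentially"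
  proof (rule filterlim_at_top_mono[OF filterlim_ident always_eventually], intro allI)
    fix k show "k \<le> m k - 1" using m_ge[of k] by linarith
  qed
  ultimately have lim: "((\<lambda>k. tnorm (of_int (u (m k - 1)) * series a)) \<longlongrightarrow> 0) sequentially"
    by (rule filterlim_compose)
  have nonneg: "0 \<le> of_int (a k) / Q k" for k
    using assms(1) Q_ge_2[of k] unfolding admissible_def by simp
  show "((\<lambda>k. of_int (a k) / Q k) \<longlongrightarrow> 0) sequentially"
    by (rule tendsto_sandwich[OF _ _ tendsto_const lim])
      (use nonneg tnorm_mult_series_ge[OF assms] in \<open>auto intro: always_eventually\<close>)
next
  assume lim: "((\<lambda>k. of_int (a k) / Q k) \<longlongrightarrow> 0) sequentially"
  have "((\<lambda>j. 2 * r / Q j) \<longlongrightarrow> 0) sequentially"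
    by (rule tendsto_divide_0[OF tendsto_const filterlim_at_top_imp_at_infinity[OF filterlim_Q]])
  from tendsto_add[OF lim this] have "((\<lambda>j. (of_int (a j) + 2 * r) / Q j) \<longlongrightarrow> 0) sequentially"
    by (simp add: add_divide_distrib)
  hence bound: "((\<lambda>n. (of_int (a (block n)) + 2 * r) / Q (block n)) \<longlongrightarrow> 0) sequentially"
    using filterlim_block by (rule filterlim_compose)
  have "((\<lambda>n. tnorm (of_int (u n) * series a)) \<longlongrightarrow> 0) sequentially"
    by (rule tendsto_sandwich[OF _ _ tendsto_const bound])
      (use tnorm_u_mult_series_le[OF assms(1)] in \<open>auto intro: always_eventually tnorm_nonneg\<close>)
  thus "series a \<in> s_u u" unfolding s_u_def by simp
qed

lemma floor_bounds:
  assumes "0 \<le> s" "s \<le> t"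
  shows "0 \<le> \<lfloor>s * Q k\<rfloor>" "of_int \<lfloor>s * Q k\<rfloor> \<le> t * Q k"
proof -
  have "s * Q k \<le> t * Q k" using assms Q_ge_2[of k] by (intro mult_right_mono) auto
  thus "of_int \<lfloor>s * Q k\<rfloor> \<le> t * Q k" using of_int_floor_le[of "s * Q k"] by linarith
  show "0 \<le> \<lfloor>s * Q k\<rfloor>" using assms Q_ge_2[of k] by simp
qed

lemma floor_quotient_tendsto: "((\<lambda>k. of_int \<lfloor>r * Q k\<rfloor> / Q k) \<longlongrightarrow> r) sequentially"
proof (rule tendsto_sandwich[of "\<lambda>k. r - 1 / Q k" _ _ "\<lambda>_. r"])
  have "((\<lambda>k. 1 / Q k) \<longlongrightarrow> 0) sequentially"
    by (rule tendsto_divide_0[OF tendsto_const filterlim_at_top_imp_at_infinity[OF filterlim_Q]])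
  from tendsto_diff[OF tendsto_const this, of r]
  show "((\<lambda>k. r - 1 / Q k) \<longlongrightarrow> r) sequentially" by simp
  have "r - 1 / Q k \<le> of_int \<lfloor>r * Q k\<rfloor> / Q k \<and> of_int \<lfloor>r * Q k\<rfloor> / Q k \<le> r" for k
  proof -
    have Q: "Q k > 0" using Q_ge_2[of k] by simp
    have "(r * Q k - 1) / Q k \<le> of_int \<lfloor>r * Q k\<rfloor> / Q k" "of_int \<lfloor>r * Q k\<rfloor> / Q k \<le> r * Q k / Q k"
      using Q by (intro divide_right_mono; linarith)+
    thus ?thesis using Q by (simp add: diff_divide_distrib)
  qed
  thus "\<forall>\<^sub>F k in sequentially. r - 1 / Q k \<le> of_int \<lfloor>r * Q k\<rfloor> / Q k"
    "\<forall>\<^sub>F k in sequentially. of_int \<lfloor>r * Q k\<rfloor> / Q k \<le> r"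
    by (auto intro: always_eventually)
qed simp

lemma rho_series_le: assumes "admissible r a" shows "rho u 0 (series a) \<le> 2 * r"
proof (rule rho_le)
  have "\<bar>of_int (1::int)\<bar> \<le> v 0" using v_ge_pow[of 0] by simp
  from tnorm_mult_series_le[OF assms _ this] have "tnorm (series a) \<le> (of_int (a 0) + 2 * r) / Q 0"
    by simp
  thus "tdist 0 (series a) \<le> 2 * r"
    using block_bound_le[OF assms, of 0] tnorm_minus[of "series a"] by (simp add: tdist_def)
  show "tdist (of_int (u n) * 0) (of_int (u n) * series a) \<le> 2 * r" for n
    using tnorm_u_mult_series_le[OF assms, of n] block_bound_le[OF assms, of "block n"]
      tnorm_minus[of "of_int (u n) * series a"] by (simp add: tdist_def)
qed

lemma not_tau_open_s_u: "\<not> tau_open u (s_u u)"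
proof
  assume "tau_open u (s_u u)"
  then obtain e where e: "e > 0" "\<And>y. rho u 0 y < e \<Longrightarrow> y \<in> s_u u"
    using zero_in_s_u unfolding tau_open_def by blast
  define r where "r = min e 1 / 8"
  have r: "0 < r" "r \<le> 1/4" "2 * r < e" using e(1) unfolding r_def by auto
  have adm: "admissible r (\<lambda>k. \<lfloor>r * Q k\<rfloor>)"
    unfolding admissible_def using floor_bounds[of r r] r by auto
  have "series (\<lambda>k. \<lfloor>r * Q k\<rfloor>) \<in> s_u u"
    using e(2) rho_series_le[OF adm] r(3) by simp
  hence "((\<lambda>k. of_int \<lfloor>r * Q k\<rfloor> / Q k) \<longlongrightarrow> 0) sequentially"
    using series_in_s_u_iff[OF adm r(2)] by simp
  thus False using LIMSEQ_unique[OF floor_quotient_tendsto] r(1) by fastforce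
qed

lemma series_diff_le:
  assumes "admissible r a" "admissible r b" "\<forall>k<L. a k = b k"
  shows "\<bar>series a - series b\<bar> \<le> 2 * r / v L"
proof -
  have "series a - series b = tail a L - tail b L"
    using series_split[OF assms(1), of L] series_split[OF assms(2), of L] assms(3) by simp
  thus ?thesis using tail_nonneg[OF assms(1), of L] tail_nonneg[OF assms(2), of L]
      tail_le[OF assms(1), of L] tail_le[OF assms(2), of L] by linarith
qed

lemma series_prefix_avoids_closed:
  assumes "closed F" "admissible r a" "series a \<notin> F"
  shows "\<exists>L>L\<^sub>0. \<forall>b. admissible r b \<and> (\<forall>k<L. b k = a k) \<longrightarrow> series b \<notin> F"
proof -
  obtain d where d: "d > 0" "ball (series a) d \<subseteq> - F"
    using assms(1,3) open_contains_ball[of "- F"] by (auto simp: open_Compl)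
  have "((\<lambda>L. 2 * r * (1/2) ^ L) \<longlongrightarrow> 0) sequentially"
    by (intro tendsto_mult_right_zero LIMSEQ_power_zero) simp
  from eventually_conj[OF order_tendstoD(2)[OF this d(1)] eventually_gt_at_top[of L\<^sub>0]]
  obtain L where L: "2 * r * (1/2) ^ L < d" "L\<^sub>0 < L" by (auto simp: eventually_sequentially)
  have "2 * r / v L \<le> 2 * r / 2 ^ L"
    using admissible_nonneg[OF assms(2)] v_ge_pow[of L] v_pos[of L] by (intro divide_left_mono) auto
  moreover have "2 * r / 2 ^ L = 2 * r * (1/2) ^ L" by (simp add: power_one_over)
  ultimately have "series b \<in> ball (series a) d" if "admissible r b" "\<forall>k<L. b k = a k" for b
    using series_diff_le[OF assms(2) that(1), of L] that(2) L(1) by (simp add: dist_real_def)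
  thus ?thesis using d(2) L(2) by blast
qed

definition extend :: "real \<Rightarrow> nat \<Rightarrow> (nat \<Rightarrow> int) \<Rightarrow> nat \<Rightarrow> int" where
  "extend r L a k = (if k < L then a k else \<lfloor>r * Q k\<rfloor>)"

lemma admissible_extend:
  assumes "admissible t a" "0 \<le> r" "r \<le> t"
  shows "admissible t (extend r L a)"
  using assms floor_bounds[OF assms(2,3)] unfolding admissible_def extend_def by auto

lemma series_extend_notin_s_u:
  assumes "admissible (1/4) a" "0 < r" "r \<le> 1/4"
  shows "series (extend r L a) \<notin> s_u u"
proof
  assume "series (extend r L a) \<in> s_u u"
  hence "((\<lambda>k. of_int (extend r L a k) / Q k) \<longlongrightarrow> 0) sequentially"
    using series_in_s_u_iff[OF admissible_extend[OF assms(1)]] assms by simp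
  moreover have "\<forall>\<^sub>F k in sequentially. of_int (extend r L a k) / Q k = of_int \<lfloor>r * Q k\<rfloor> / Q k"
    unfolding extend_def eventually_sequentially by (auto intro: exI[of _ L])
  ultimately have "((\<lambda>k. of_int \<lfloor>r * Q k\<rfloor> / Q k) \<longlongrightarrow> 0) sequentially"
    by (rule Lim_transform_eventually)
  thus False using LIMSEQ_unique[OF floor_quotient_tendsto] assms(2) by fastforce
qed

text \<open>Stage \<open>i\<close> continues the current prefix with digits of relative size \<open>r i\<close> (so the
  continuation is not in \<open>s_u\<close>, hence not in \<open>F i\<close>) and then fixes a prefix so long that
  every admissible sequence extending it stays outside the closed set \<open>F i\<close>.\<close>

lemma nested_extensions:
  fixes F :: "nat \<Rightarrow> real set" and r :: "nat \<Rightarrow> real"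
  assumes "\<And>i. closed (F i)" "\<And>i. F i \<subseteq> s_u u" "\<And>i. 0 < r i" "\<And>i. r i \<le> 1/4"
  obtains L P where "\<And>i. L i < L (Suc i)" "\<And>i. admissible (1/4) (P i)"
    "\<And>i. P (Suc i) = extend (r i) (L i) (P i)"
    "\<And>i b. admissible (1/4) b \<Longrightarrow> \<forall>k<L (Suc i). b k = P (Suc i) k \<Longrightarrow> series b \<notin> F i"
proof -
  define good where "good i L a L' \<longleftrightarrow> L < L' \<and>
      (\<forall>b. admissible (1/4) b \<and> (\<forall>k<L'. b k = extend (r i) L a k) \<longrightarrow> series b \<notin> F i)" for i L a L'
  have good_ex: "\<exists>L'. good i L a L'" if a: "admissible (1/4) a" for i L a
  proof -
    have adm': "admissible (1/4) (extend (r i) L a)"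
      by (rule admissible_extend[OF a less_imp_le[OF assms(3)] assms(4)])
    have "series (extend (r i) L a) \<notin> F i"
      using series_extend_notin_s_u[OF a assms(3,4)] assms(2) by blast
    from series_prefix_avoids_closed[OF assms(1) adm' this, of L] show ?thesis
      unfolding good_def by blast
  qed
  define nxt where "nxt i L a = (SOME L'. good i L a L')" for i L a
  have good_nxt: "good i L a (nxt i L a)" if "admissible (1/4) a" for i L a
    unfolding nxt_def by (rule someI_ex[OF good_ex[OF that]])
  define st where "st = rec_nat (0, \<lambda>_. 0) (\<lambda>i (L, a). (nxt i L a, extend (r i) L a))"
  define L where "L i = fst (st i)" for i
  define P where "P i = snd (st i)" for i
  have L_Suc: "L (Suc i) = nxt i (L i) (P i)" and P_Suc: "P (Suc i) = extend (r i) (L i) (P i)" for i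
    unfolding L_def P_def st_def by (simp_all split: prod.split)
  have adm: "admissible (1/4) (P i)" for i
  proof (induction i)
    case 0
    have "0 \<le> Q k" for k using Q_ge_2[of k] by simp
    thus ?case unfolding P_def st_def admissible_def by simp
  next
    case (Suc i) show ?case unfolding P_Suc by (rule admissible_extend[OF Suc less_imp_le[OF assms(3)] assms(4)])
  qed
  have "good i (L i) (P i) (L (Suc i))" for i
    unfolding L_Suc by (rule good_nxt[OF adm])
  thus ?thesis by (intro that[OF _ adm P_Suc]) (auto simp: good_def P_Suc)
qed

lemma quotient_tendsto_0:
  assumes "admissible t a" "\<And>e. 0 < e \<Longrightarrow> \<exists>c<e. \<forall>\<^sub>F k in sequentially. of_int (a k) \<le> c * Q k"
  shows "((\<lambda>k. of_int (a k) / Q k) \<longlongrightarrow> 0) sequentially"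
proof (rule order_tendstoI)
  have "0 \<le> of_int (a k) / Q k" for k using assms(1) Q_ge_2[of k] unfolding admissible_def by simp
  thus "\<forall>\<^sub>F k in sequentially. c < of_int (a k) / Q k" if "c < 0" for c
    using that by (auto intro: always_eventually less_le_trans)
next
  fix e :: real assume "0 < e"
  then obtain c where c: "c < e" "\<forall>\<^sub>F k in sequentially. of_int (a k) \<le> c * Q k"
    using assms(2) by blast
  show "\<forall>\<^sub>F k in sequentially. of_int (a k) / Q k < e"
  proof (rule eventually_mono[OF c(2)])
    fix k assume "of_int (a k) \<le> c * Q k"
    hence "of_int (a k) / Q k \<le> c" using Q_ge_2[of k] by (simp add: pos_divide_le_eq)
    thus "of_int (a k) / Q k < e" using c(1) by simp
  qed
qed

lemma exists_s_u_avoiding_closed: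
  fixes F :: "nat \<Rightarrow> real set"
  assumes "\<And>i. closed (F i)" "\<And>i. F i \<subseteq> s_u u"
  shows "\<exists>x\<in>s_u u. \<forall>i. x \<notin> F i"
proof -
  define r where "r i = 1 / (4 * (real i + 1))" for i
  have r_pos: "0 < r i" and r_le: "r i \<le> 1/4" and r_anti: "i \<le> j \<Longrightarrow> r j \<le> r i" for i j
    unfolding r_def by (simp_all add: frac_le)
  obtain L P where L_less: "\<And>i. L i < L (Suc i)" and adm: "\<And>i. admissible (1/4) (P i)"
    and P_Suc: "\<And>i. P (Suc i) = extend (r i) (L i) (P i)"
    and avoid: "\<And>i b. admissible (1/4) b \<Longrightarrow> \<forall>k<L (Suc i). b k = P (Suc i) k \<Longrightarrow> series b \<notin> F i"
    by (rule nested_extensions[of F r, OF assms r_pos r_le]) (rule that)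
  define a where "a k = P (Suc k) k" for k
  have P_keep: "P (Suc i) k = P i k" if "k < L i" for i k
    using that by (simp add: P_Suc extend_def)
  have a_eq: "a k = P i k" if "k < L i" for i k
    unfolding a_def using L_less P_keep that by (rule diagonal_stable[of L P])
  have a_adm: "admissible (1/4) a"
    using adm unfolding admissible_def a_def by blast
  have P_small: "of_int (P j k) \<le> r i * Q k" if "Suc i \<le> j" "L i \<le> k" for i j k
    using that(1)
  proof (induction j rule: dec_induct)
    case base thus ?case using that(2) floor_bounds(2)[OF less_imp_le[OF r_pos] order_refl]
      unfolding P_Suc extend_def by simp
  next
    case (step j)
    thus ?case using floor_bounds(2)[OF less_imp_le[OF r_pos] r_anti, of i j k]
      unfolding P_Suc extend_def by simp
  qed
  have "\<exists>c<e. \<forall>\<^sub>F k in sequentially. of_int (a k) \<le> c * Q k" if "0 < e" for e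
  proof -
    obtain i :: nat where "1 / e < real i" using reals_Archimedean2 by blast
    hence "r i < e" using \<open>0 < e\<close> unfolding r_def by (simp add: field_simps)
    have "strict_mono L" using L_less by (rule strict_monoI_Suc)
    hence "of_int (a k) \<le> r i * Q k" if "L i \<le> k" for k
      using strict_mono_imp_increasing[of L i] that P_small unfolding a_def by simp
    thus ?thesis using \<open>r i < e\<close> unfolding eventually_sequentially by blast
  qed
  hence "((\<lambda>k. of_int (a k) / Q k) \<longlongrightarrow> 0) sequentially"
    by (rule quotient_tendsto_0[OF a_adm])
  hence "series a \<in> s_u u" using series_in_s_u_iff[OF a_adm] by simp
  moreover have "series a \<notin> F i" for i using avoid[OF a_adm] a_eq by blast
  ultimately show ?thesis by blast
qed

lemma not_fsigma_in_s_u: "\<not> fsigma_in euclideanreal (s_u u)"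
proof
  assume "fsigma_in euclideanreal (s_u u)"
  then obtain C where C: "countable C" "C \<subseteq> Collect (closedin euclidean)" "\<Union>C = s_u u"
    unfolding fsigma_in_def union_of_def by blast
  have "C \<noteq> {}" using C(3) zero_in_s_u by auto
  hence mem: "from_nat_into C i \<in> C" for i by (rule from_nat_into)
  have "closed (from_nat_into C i)" for i using C(2) mem[of i] unfolding closed_closedin by blast
  moreover have "from_nat_into C i \<subseteq> s_u u" for i using C(3) mem[of i] by blast
  ultimately obtain x where x: "x \<in> s_u u" "\<forall>i. x \<notin> from_nat_into C i"
    using exists_s_u_avoiding_closed[of "from_nat_into C"] by blast
  then obtain c where "c \<in> C" "x \<in> c" using C(3) by blast
  moreover have "c \<in> range (from_nat_into C)" using \<open>c \<in> C\<close> C(1) \<open>C \<noteq> {}\<close> by simp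
  ultimately show False using x(2) by blast
qed

end

lemma unbounded_ratio_frequently:
  assumes "a_seq u" "\<not> (\<exists>B. \<forall>n. \<bar>ratio u n\<bar> \<le> B)"
  shows "\<exists>n>N. B \<le> ratio u n"
proof (rule ccontr)
  assume none: "\<not> (\<exists>n>N. B \<le> ratio u n)"
  define N' where "N' = max N 1"
  define B' where "B' = max B (Max ((\<lambda>n. \<bar>ratio u n\<bar>) ` {..N'}))"
  have "\<bar>ratio u n\<bar> \<le> B'" for n
  proof (cases "n \<le> N'")
    case True thus ?thesis unfolding B'_def by (simp add: le_max_iff_disj)
  next
    case False
    hence "N < n" "2 \<le> n" unfolding N'_def by auto
    hence "ratio u n < B" "2 \<le> ratio u n" using none a_seq_ratio_ge_2[OF assms(1), of n] by auto
    thus ?thesis unfolding B'_def by simp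
  qed
  thus False using assms(2) by blast
qed

lemma exists_ratio_spikes:
  assumes "a_seq u" "\<not> (\<exists>B. \<forall>n. \<bar>ratio u n\<bar> \<le> B)"
  shows "\<exists>m. ratio_spikes u m"
proof -
  obtain g where g: "\<And>N B. N < g N B \<and> B \<le> ratio u (g N B)"
    using unbounded_ratio_frequently[OF assms] by metis
  define m where "m = rec_nat (g 1 2) (\<lambda>k mk. g mk (int (Suc k) + 2))"
  have "ratio_spikes u m"
  proof
    show "a_seq u" by (rule assms(1))
    show "2 \<le> m 0" using g[of 1 2] unfolding m_def by simp
    show "m k < m (Suc k)" for k using g[of "m k"] unfolding m_def by simp
    show "int k + 2 \<le> ratio u (m k)" for k
      using g unfolding m_def by (cases k) simp_all
  qed
  thus ?thesis by blast
qed

lemma fsigma_in_countable: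
  fixes S :: "'a::t1_space set"
  assumes "countable S"
  shows "fsigma_in euclidean S"
proof -
  have "fsigma_in euclidean (\<Union>x\<in>S. {x})"
    using assms by (intro fsigma_in_Union closed_imp_fsigma_in) (auto simp flip: closed_closedin)
  thus ?thesis by simp
qed

theorem theoremE:
  fixes u :: "nat \<Rightarrow> int"
  assumes "a_seq u"
  shows "((\<exists>B. \<forall>n. \<bar>ratio u n\<bar> \<le> B) \<longleftrightarrow> s_u u \<subseteq> \<rat>)
       \<and> (s_u u \<subseteq> \<rat> \<longleftrightarrow> countable (s_u u))
       \<and> (countable (s_u u) \<longleftrightarrow> fsigma_in euclideanreal (s_u u))
       \<and> (fsigma_in euclideanreal (s_u u) \<longleftrightarrow> tau_star_open u (s_u u))
       \<and> (tau_star_open u (s_u u) \<longleftrightarrow> tau_open u (s_u u))"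
proof -
  define bounded where "bounded \<longleftrightarrow> (\<exists>B. \<forall>n. \<bar>ratio u n\<bar> \<le> B)"
  have rat: "bounded \<Longrightarrow> s_u u \<subseteq> \<rat>"
    unfolding bounded_def using s_u_subset_Rats_if_bounded[OF assms] by blast
  have countable: "s_u u \<subseteq> \<rat> \<Longrightarrow> countable (s_u u)"
    using countable_rat countable_subset by blast
  have fsigma: "countable (s_u u) \<Longrightarrow> fsigma_in euclideanreal (s_u u)"
    by (rule fsigma_in_countable)
  have tau_star: "bounded \<Longrightarrow> tau_star_open u (s_u u)"
    unfolding bounded_def using tau_star_open_s_u_if_bounded[OF assms] by blast
  have tau: "tau_star_open u (s_u u) \<Longrightarrow> tau_open u (s_u u)"
    by (rule tau_open_if_tau_star_open)
  have unbounded: "\<not> fsigma_in euclideanreal (s_u u) \<and> \<not> tau_open u (s_u u)" if "\<not> bounded"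
    using exists_ratio_spikes[OF assms that[unfolded bounded_def]]
      ratio_spikes.not_fsigma_in_s_u ratio_spikes.not_tau_open_s_u by blast
  show ?thesis unfolding bounded_def[symmetric]
    using rat countable fsigma tau_star tau unbounded by blast
qed

end
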